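(* Let $c\in\mathbb{N}$. There exists a strategy $\sigma_0$ of player $0$ that is a solution to the NCNS problem with threshold $c$ (i.e., every $\sigma_0$-fixed NE $\sigma$ satisfies $\mathrm{cost}_0(\mathrm{out}(\sigma))\le c$) if and only if there exists a $c$-witness.
   Context: Reachability game with one-player environment: a finite set $V$ of vertices, edges $E\subseteq V\times V$ (each vertex has a successor), initial vertex $v_0$, two players $0$ and $1$ owning a partition $V_0\uplus V_1$ of $V$, weight functions $w_0,w_1:E\to\mathbb{N}$ and target sets $T_0,T_1\subseteq V$. For a play (infinite path) $\pi$, $\mathrm{cost}_i(\pi)$ is the sum of $w_i$ over the edges of the shortest prefix of $\pi$ ending in $T_i$, and $+\infty$ if none. A strategy of player $i$ maps each finite path ending in $V_i$ to a successor of its last vertex. Given $\sigma_0$, a profile $(\sigma_0,\sigma_1)$ is a $\sigma_0$-fixed NE if for every strategy $\tau_1$ of player $1$, $\mathrm{cost}_1(\mathrm{out}(\sigma_0,\sigma_1))\le\mathrm{cost}_1(\mathrm{out}(\sigma_0,\tau_1))$, where $\mathrm{out}$ is the outcome play from $v_0$. A deviation of a play $\pi$ is a finite path $hv$ ($v\in V$) such that $h$ is a nonempty prefix of $\pi$ but $hv$ is not. A $c$-witness is a play $\pi$ from $v_0$ such that $\mathrm{cost}_0(\pi)\le c$ and, with $d=\mathrm{cost}_1(\pi)$, for every deviation $hv$ of $\pi$, player $0$ has a strategy from $v$ in the two-player zero-sum game (player $0$ against player $1$) such that every play $\pi'$ starting at $v$ consistent with it satisfies $\mathrm{cost}_0(h\pi')\le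 c$ or $\mathrm{cost}_1(h\pi')>d$.
   Formalization: The deviations hv of $\pi$ that a c-witness must handle are only those whose prefix h ends in a vertex of $V_1$ (deviations by player 1), not those at player-0 vertices. The paper assumes this as well. *)

theory Defs
  imports Main "HOL-Library.Extended_Nat"
begin

record 'v game =
  verts :: "'v set"
  edges :: "('v \<times> 'v) set"
  init  :: 'v
  own0  :: "'v set"
  own1  :: "'v set"
  wt0   :: "'v \<times> 'v \<Rightarrow> nat"
  wt1   :: "'v \<times> 'v \<Rightarrow> nat"
  tgt0  :: "'v set"
  tgt1  :: "'v set"

definition wf_game :: "'v game \<Rightarrow> bool" where
  "wf_game G \<longleftrightarrow> finite (verts G) \<and> edges G \<subseteq> verts G \<times> verts G
     \<and> (\<forall>v\<in>verts G. \<exists>u. (v, u) \<in> edges G) \<and> init G \<in> verts G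
     \<and> own0 G \<inter> own1 G = {} \<and> own0 G \<union> own1 G = verts G
     \<and> tgt0 G \<subseteq> verts G \<and> tgt1 G \<subseteq> verts G"

definition is_path :: "'v game \<Rightarrow> 'v list \<Rightarrow> bool" where
  "is_path G xs \<longleftrightarrow> xs \<noteq> [] \<and> set xs \<subseteq> verts G
     \<and> (\<forall>i. Suc i < length xs \<longrightarrow> (xs ! i, xs ! Suc i) \<in> edges G)"

definition is_play :: "'v game \<Rightarrow> (nat \<Rightarrow> 'v) \<Rightarrow> bool" where
  "is_play G \<pi> \<longleftrightarrow> (\<forall>n. \<pi> n \<in> verts G \<and> (\<pi> n, \<pi> (Suc n)) \<in> edges G)"

text \<open>Prefix of length \<open>n+1\<close> of a play.\<close>
definition pref :: "(nat \<Rightarrow> 'v) \<Rightarrow> nat \<Rightarrow> 'v list" where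
  "pref \<pi> n = map \<pi> [0..<Suc n]"

definition conc :: "'v list \<Rightarrow> (nat \<Rightarrow> 'v) \<Rightarrow> nat \<Rightarrow> 'v" where
  "conc h \<pi> n = (if n < length h then h ! n else \<pi> (n - length h))"

definition cost :: "('v \<times> 'v \<Rightarrow> nat) \<Rightarrow> 'v set \<Rightarrow> (nat \<Rightarrow> 'v) \<Rightarrow> enat" where
  "cost w T \<pi> = (if \<exists>n. \<pi> n \<in> T
      then enat (\<Sum>k < (LEAST n. \<pi> n \<in> T). w (\<pi> k, \<pi> (Suc k)))
      else \<infinity>)"

definition cost0 :: "'v game \<Rightarrow> (nat \<Rightarrow> 'v) \<Rightarrow> enat" where
  "cost0 G \<pi> = cost (wt0 G) (tgt0 G) \<pi>"

definition cost1 :: "'v game \<Rightarrow> (nat \<Rightarrow> 'v) \<Rightarrow> enat" where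
  "cost1 G \<pi> = cost (wt1 G) (tgt1 G) \<pi>"

definition is_strategy :: "'v game \<Rightarrow> 'v set \<Rightarrow> ('v list \<Rightarrow> 'v) \<Rightarrow> bool" where
  "is_strategy G Vi \<sigma> \<longleftrightarrow> (\<forall>h. is_path G h \<and> last h \<in> Vi \<longrightarrow> (last h, \<sigma> h) \<in> edges G)"

definition consistent :: "'v set \<Rightarrow> ('v list \<Rightarrow> 'v) \<Rightarrow> (nat \<Rightarrow> 'v) \<Rightarrow> bool" where
  "consistent Vi \<sigma> \<pi> \<longleftrightarrow> (\<forall>n. \<pi> n \<in> Vi \<longrightarrow> \<pi> (Suc n) = \<sigma> (pref \<pi> n))"

primrec outh :: "'v game \<Rightarrow> ('v list \<Rightarrow> 'v) \<Rightarrow> ('v list \<Rightarrow> 'v) \<Rightarrow> nat \<Rightarrow> 'v list" where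
  "outh G \<sigma>0 \<sigma>1 0 = [init G]"
| "outh G \<sigma>0 \<sigma>1 (Suc n) =
     (let h = outh G \<sigma>0 \<sigma>1 n in h @ [if last h \<in> own0 G then \<sigma>0 h else \<sigma>1 h])"

definition out :: "'v game \<Rightarrow> ('v list \<Rightarrow> 'v) \<Rightarrow> ('v list \<Rightarrow> 'v) \<Rightarrow> nat \<Rightarrow> 'v" where
  "out G \<sigma>0 \<sigma>1 n = last (outh G \<sigma>0 \<sigma>1 n)"

definition fixed_NE :: "'v game \<Rightarrow> ('v list \<Rightarrow> 'v) \<Rightarrow> ('v list \<Rightarrow> 'v) \<Rightarrow> bool" where
  "fixed_NE G \<sigma>0 \<sigma>1 \<longleftrightarrow> is_strategy G (own1 G) \<sigma>1 \<and>
     (\<forall>\<tau>1. is_strategy G (own1 G) \<tau>1 \<longrightarrow>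
        cost1 G (out G \<sigma>0 \<sigma>1) \<le> cost1 G (out G \<sigma>0 \<tau>1))"

definition NCNS_solution :: "'v game \<Rightarrow> nat \<Rightarrow> ('v list \<Rightarrow> 'v) \<Rightarrow> bool" where
  "NCNS_solution G c \<sigma>0 \<longleftrightarrow> is_strategy G (own0 G) \<sigma>0 \<and>
     (\<forall>\<sigma>1. fixed_NE G \<sigma>0 \<sigma>1 \<longrightarrow> cost0 G (out G \<sigma>0 \<sigma>1) \<le> enat c)"

text \<open>Deviation \<open>h v\<close> of \<open>\<pi>\<close> with \<open>h = pref \<pi> n\<close>: a finite path, \<open>h v\<close> not a prefix
  of \<open>\<pi>\<close> (i.e. \<open>v \<noteq> \<pi> (n+1)\<close>), taken by player 1 (\<open>last h \<in> V1\<close>).\<close>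
definition is_deviation :: "'v game \<Rightarrow> (nat \<Rightarrow> 'v) \<Rightarrow> nat \<Rightarrow> 'v \<Rightarrow> bool" where
  "is_deviation G \<pi> n v \<longleftrightarrow> is_path G (pref \<pi> n @ [v]) \<and> v \<noteq> \<pi> (Suc n) \<and> \<pi> n \<in> own1 G"

definition witness :: "'v game \<Rightarrow> nat \<Rightarrow> (nat \<Rightarrow> 'v) \<Rightarrow> bool" where
  "witness G c \<pi> \<longleftrightarrow> is_play G \<pi> \<and> \<pi> 0 = init G \<and> cost0 G \<pi> \<le> enat c \<and>
     (\<forall>n v. is_deviation G \<pi> n v \<longrightarrow>
        (\<exists>\<tau>. is_strategy G (own0 G) \<tau> \<and>
           (\<forall>\<pi>'. is_play G \<pi>' \<and> \<pi>' 0 = v \<and> consistent (own0 G) \<tau> \<pi>' \<longrightarrow>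
              cost0 G (conc (pref \<pi> n) \<pi>') \<le> enat c \<or>
              cost1 G (conc (pref \<pi> n) \<pi>') > cost1 G \<pi>)))"

end

theory Submission
  imports Defs
begin

(* Once \<sigma>0 is fixed, player 1 faces a one-player game, so a profile is a \<sigma>0-fixed NE exactly
   when its outcome minimises cost1 among the plays from the initial vertex consistent with \<sigma>0.
   Given a solution \<sigma>0, any such cost1-minimal play \<pi> is a witness: after a deviation h v player 0
   keeps playing \<sigma>0, and a continuation whose cost1 does not exceed that of \<pi> is again a
   cost1-minimal consistent play, so its cost0 is at most c.
   Given a witness \<pi>, player 0 follows \<pi> until player 1 first leaves it by a deviation h v, and from
   then on plays the strategy the witness provides for h v. An NE outcome has cost1 at most that of
   \<pi>, since player 1 could simply follow \<pi>; so either it is \<pi> or its deviation did not raise cost1,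
   and in both cases its cost0 is at most c. *)

lemma ex_min_wellorder:
  fixes f :: "'a \<Rightarrow> 'b::wellorder"
  assumes "x \<in> S"
  obtains y where "y \<in> S" "\<And>z. z \<in> S \<Longrightarrow> f y \<le> f z"
proof -
  have "f x \<in> f ` S" using assms by (rule imageI)
  then have "(LEAST d. d \<in> f ` S) \<in> f ` S" by (rule LeastI)
  then obtain y where y: "y \<in> S" "f y = (LEAST d. d \<in> f ` S)" by (auto simp: image_iff)
  have "f y \<le> f z" if "z \<in> S" for z
    unfolding y(2) by (rule Least_le) (use that in blast)
  with y(1) show ?thesis by (rule that)
qed

definition succ :: "'v game \<Rightarrow> 'v \<Rightarrow> 'v" where
  "succ G u = (SOME w. (u, w) \<in> edges G)"

lemma succ_edge: "wf_game G \<Longrightarrow> u \<in> verts G \<Longrightarrow> (u, succ G u) \<in> edges G"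
  unfolding succ_def wf_game_def by (meson someI_ex)

lemma length_pref [simp]: "length (pref \<rho> n) = Suc n"
  by (simp add: pref_def)

lemma nth_pref [simp]: "k \<le> n \<Longrightarrow> pref \<rho> n ! k = \<rho> k"
  unfolding pref_def by (subst nth_map_upt) auto

lemma last_pref [simp]: "last (pref \<rho> n) = \<rho> n"
  by (simp add: pref_def)

lemma pref_Suc: "pref \<rho> (Suc n) = pref \<rho> n @ [\<rho> (Suc n)]"
  by (simp add: pref_def)

lemma pref_eq_iff: "pref f n = pref g n \<longleftrightarrow> (\<forall>k\<le>n. f k = g k)"
  by (auto simp: pref_def)

lemma drop_pref: "drop m (pref \<rho> (m + k)) = pref (\<lambda>j. \<rho> (m + j)) k"
  by (rule nth_equalityI) auto

lemma path_last: "is_path G h \<Longrightarrow> last h \<in> verts G"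
  unfolding is_path_def by auto

lemma succ_strategy: "wf_game G \<Longrightarrow> is_strategy G V (\<lambda>h. succ G (last h))"
  by (simp add: is_strategy_def succ_edge path_last)

lemma path_drop: "is_path G h \<Longrightarrow> m < length h \<Longrightarrow> is_path G (drop m h)"
  unfolding is_path_def by (auto dest: in_set_dropD)

lemma path_pref: "is_play G \<rho> \<Longrightarrow> is_path G (pref \<rho> n)"
  unfolding is_path_def is_play_def by (auto simp del: upt_Suc simp: pref_def)

lemma path_pref_SucI:
  "is_path G (pref \<rho> n) \<Longrightarrow> (\<rho> n, \<rho> (Suc n)) \<in> edges G \<Longrightarrow> \<rho> (Suc n) \<in> verts G
   \<Longrightarrow> is_path G (pref \<rho> (Suc n))"
  unfolding is_path_def by (auto simp: pref_Suc nth_append less_Suc_eq)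

lemma play_if_paths: "(\<And>n. is_path G (pref \<rho> n)) \<Longrightarrow> is_play G \<rho>"
  unfolding is_play_def
proof
  fix n assume paths: "\<And>n. is_path G (pref \<rho> n)"
  have "(pref \<rho> (Suc n) ! n, pref \<rho> (Suc n) ! Suc n) \<in> edges G"
    using paths[of "Suc n"] unfolding is_path_def by simp
  then show "\<rho> n \<in> verts G \<and> (\<rho> n, \<rho> (Suc n)) \<in> edges G"
    using path_last[OF paths[of n]] by simp
qed

lemma out_0 [simp]: "out G \<sigma>0 \<sigma>1 0 = init G"
  by (simp add: out_def)

lemma outh_eq_pref: "outh G \<sigma>0 \<sigma>1 n = pref (out G \<sigma>0 \<sigma>1) n"
proof (induction n)
  case 0
  then show ?case by (simp add: pref_def)
next
  case (Suc n)
  have "out G \<sigma>0 \<sigma>1 (Suc n) = last (outh G \<sigma>0 \<sigma>1 (Suc n))"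
    by (simp only: out_def)
  then show ?case using Suc by (simp add: Let_def pref_Suc)
qed

lemma out_Suc:
  "out G \<sigma>0 \<sigma>1 (Suc n) = (if out G \<sigma>0 \<sigma>1 n \<in> own0 G then \<sigma>0 (pref (out G \<sigma>0 \<sigma>1) n)
     else \<sigma>1 (pref (out G \<sigma>0 \<sigma>1) n))"
proof -
  have "out G \<sigma>0 \<sigma>1 (Suc n) = last (outh G \<sigma>0 \<sigma>1 (Suc n))"
    by (simp only: out_def)
  also have "\<dots> = (if last (outh G \<sigma>0 \<sigma>1 n) \<in> own0 G then \<sigma>0 (outh G \<sigma>0 \<sigma>1 n)
      else \<sigma>1 (outh G \<sigma>0 \<sigma>1 n))"
    by (simp add: Let_def)
  finally show ?thesis by (simp only: outh_eq_pref last_pref)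
qed

lemma out_unique:
  assumes "\<rho> 0 = init G"
    and "\<And>n. \<rho> (Suc n) = (if \<rho> n \<in> own0 G then \<sigma>0 (pref \<rho> n) else \<sigma>1 (pref \<rho> n))"
  shows "out G \<sigma>0 \<sigma>1 = \<rho>"
proof -
  have "outh G \<sigma>0 \<sigma>1 n = pref \<rho> n" for n
    by (induction n) (simp_all add: assms pref_Suc Let_def, simp add: pref_def assms)
  then show ?thesis by (simp add: out_def fun_eq_iff)
qed

lemma out_consistent: "consistent (own0 G) \<sigma>0 (out G \<sigma>0 \<sigma>1)"
  unfolding consistent_def by (simp add: out_Suc)

lemma out_play:
  assumes wf: "wf_game G" and "is_strategy G (own0 G) \<sigma>0" "is_strategy G (own1 G) \<sigma>1"
  shows "is_play G (out G \<sigma>0 \<sigma>1)"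
proof (rule play_if_paths)
  fix n
  show "is_path G (pref (out G \<sigma>0 \<sigma>1) n)"
  proof (induction n)
    case 0
    show ?case using wf by (simp add: pref_def is_path_def wf_game_def)
  next
    case (Suc n)
    have "out G \<sigma>0 \<sigma>1 n \<in> own0 G \<union> own1 G"
      using path_last[OF Suc] wf unfolding wf_game_def by auto
    then have "(out G \<sigma>0 \<sigma>1 n, out G \<sigma>0 \<sigma>1 (Suc n)) \<in> edges G"
      using Suc assms(2,3) unfolding is_strategy_def by (auto simp: out_Suc)
    then show ?case
      using Suc wf by (intro path_pref_SucI) (auto simp: wf_game_def)
  qed
qed

definition along :: "(nat \<Rightarrow> 'v) \<Rightarrow> 'v list \<Rightarrow> bool" where
  "along \<rho> h \<longleftrightarrow> (\<forall>i<length h. h ! i = \<rho> i)"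

lemma along_pref [simp]: "along \<rho> (pref \<rho> n)"
  by (simp add: along_def)

lemma along_edge:
  assumes "is_play G \<rho>" "h \<noteq> []" "along \<rho> h"
  shows "(last h, \<rho> (length h)) \<in> edges G"
proof -
  obtain k where k: "length h = Suc k" using assms(2) by (cases h) auto
  then have "last h = \<rho> k" using assms(2,3) by (simp add: along_def last_conv_nth)
  then show ?thesis using assms(1) k unfolding is_play_def by simp
qed

definition follow :: "'v game \<Rightarrow> (nat \<Rightarrow> 'v) \<Rightarrow> 'v list \<Rightarrow> 'v" where
  "follow G \<rho> h = (if along \<rho> h then \<rho> (length h) else succ G (last h))"

lemma follow_strategy:
  assumes wf: "wf_game G" and play: "is_play G \<rho>"
  shows "is_strategy G V (follow G \<rho>)"
proof (unfold is_strategy_def, intro allI impI)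
  fix h assume h: "is_path G h \<and> last h \<in> V"
  then have "h \<noteq> []" by (simp add: is_path_def)
  then show "(last h, follow G \<rho> h) \<in> edges G"
    using along_edge[OF play] succ_edge[OF wf path_last] h by (simp add: follow_def)
qed

lemma out_follow:
  "\<rho> 0 = init G \<Longrightarrow> consistent (own0 G) \<sigma>0 \<rho> \<Longrightarrow> out G \<sigma>0 (follow G \<rho>) = \<rho>"
  by (rule out_unique) (auto simp: consistent_def follow_def)

definition outcomes :: "'v game \<Rightarrow> ('v list \<Rightarrow> 'v) \<Rightarrow> (nat \<Rightarrow> 'v) set" where
  "outcomes G \<sigma>0 = {out G \<sigma>0 \<sigma>1 | \<sigma>1. is_strategy G (own1 G) \<sigma>1}"

lemma outcomes_iff:
  assumes "wf_game G" "is_strategy G (own0 G) \<sigma>0"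
  shows "\<rho> \<in> outcomes G \<sigma>0 \<longleftrightarrow> is_play G \<rho> \<and> \<rho> 0 = init G \<and> consistent (own0 G) \<sigma>0 \<rho>"
proof
  assume "\<rho> \<in> outcomes G \<sigma>0"
  then show "is_play G \<rho> \<and> \<rho> 0 = init G \<and> consistent (own0 G) \<sigma>0 \<rho>"
    using out_play[OF assms] out_consistent unfolding outcomes_def by auto
next
  assume "is_play G \<rho> \<and> \<rho> 0 = init G \<and> consistent (own0 G) \<sigma>0 \<rho>"
  then show "\<rho> \<in> outcomes G \<sigma>0"
    unfolding outcomes_def using out_follow[of \<rho> G \<sigma>0, symmetric] follow_strategy[OF assms(1)] by blast
qed

lemma NCNS_solution_iff:
  "NCNS_solution G c \<sigma>0 \<longleftrightarrow> is_strategy G (own0 G) \<sigma>0 \<and>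
     (\<forall>\<rho>\<in>outcomes G \<sigma>0. (\<forall>\<rho>'\<in>outcomes G \<sigma>0. cost1 G \<rho> \<le> cost1 G \<rho>') \<longrightarrow> cost0 G \<rho> \<le> enat c)"
  unfolding NCNS_solution_def fixed_NE_def outcomes_def by (simp only: Ball_def mem_Collect_eq) blast

lemma conc_pref_le [simp]: "j \<le> n \<Longrightarrow> conc (pref \<pi> n) \<pi>' j = \<pi> j"
  by (simp add: conc_def)

lemma conc_pref_Suc [simp]: "conc (pref \<pi> n) \<pi>' (Suc (n + k)) = \<pi>' k"
  by (simp add: conc_def)

lemma pref_conc_pref: "pref (conc (pref \<pi> n) \<pi>') (Suc (n + k)) = pref \<pi> n @ pref \<pi>' k"
  by (rule nth_equalityI) (auto simp: nth_append conc_def)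

lemma conc_pref_suffix: "conc (pref \<rho> n) (\<lambda>k. \<rho> (Suc (n + k))) = \<rho>"
  by (auto simp: conc_def fun_eq_iff)

lemma less_or_eq_or_Suc_add:
  fixes j n :: nat
  obtains "j < n" | "j = n" | k where "j = Suc (n + k)"
  by (metis add_Suc less_iff_Suc_add linorder_neqE_nat)

lemma conc_play:
  assumes "is_play G \<pi>" "is_play G \<pi>'" "(\<pi> n, \<pi>' 0) \<in> edges G"
  shows "is_play G (conc (pref \<pi> n) \<pi>')"
  unfolding is_play_def
proof
  fix j
  let ?\<rho> = "conc (pref \<pi> n) \<pi>'"
  show "?\<rho> j \<in> verts G \<and> (?\<rho> j, ?\<rho> (Suc j)) \<in> edges G"
  proof (cases j n rule: less_or_eq_or_Suc_add)
    case 1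
    then show ?thesis using assms(1) by (simp add: is_play_def)
  next
    case 2
    then show ?thesis using assms(1,3) conc_pref_Suc[of \<pi> n \<pi>' 0] by (simp add: is_play_def)
  next
    case (3 k)
    then show ?thesis using assms(2) conc_pref_Suc[of \<pi> n \<pi>' "Suc k", simplified] by (simp add: is_play_def)
  qed
qed

definition resume :: "'v game \<Rightarrow> ('v list \<Rightarrow> 'v) \<Rightarrow> 'v list \<Rightarrow> 'v list \<Rightarrow> 'v" where
  "resume G \<sigma> h h' = (if is_path G (h @ h') then \<sigma> (h @ h') else succ G (last h'))"

lemma resume_strategy:
  assumes wf: "wf_game G" and \<sigma>: "is_strategy G V \<sigma>"
  shows "is_strategy G V (resume G \<sigma> h)"
proof (unfold is_strategy_def, intro allI impI)
  fix h' assume h': "is_path G h' \<and> last h' \<in> V"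
  then have "last (h @ h') = last h'" by (simp add: is_path_def)
  then show "(last h', resume G \<sigma> h h') \<in> edges G"
    using \<sigma> succ_edge[OF wf path_last] h' unfolding is_strategy_def resume_def by auto
qed

lemma consistent_conc_resume:
  assumes "consistent V \<sigma> \<pi>" "\<pi> n \<notin> V" "is_play G (conc (pref \<pi> n) \<pi>')"
    and "consistent V (resume G \<sigma> (pref \<pi> n)) \<pi>'"
  shows "consistent V \<sigma> (conc (pref \<pi> n) \<pi>')"
  unfolding consistent_def
proof (intro allI impI)
  fix j
  let ?\<rho> = "conc (pref \<pi> n) \<pi>'"
  assume own: "?\<rho> j \<in> V"
  show "?\<rho> (Suc j) = \<sigma> (pref ?\<rho> j)"
  proof (cases j n rule: less_or_eq_or_Suc_add)
    case 1
    then have "pref ?\<rho> j = pref \<pi> j" by (simp add: pref_eq_iff)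
    then show ?thesis using 1 own assms(1) by (simp add: consistent_def)
  next
    case 2
    then show ?thesis using own assms(2) by simp
  next
    case (3 k)
    then have "pref ?\<rho> j = pref \<pi> n @ pref \<pi>' k" by (simp add: pref_conc_pref)
    moreover have "is_path G (pref ?\<rho> j)" using assms(3) by (rule path_pref)
    ultimately show ?thesis
      using 3 own assms(4) conc_pref_Suc[of \<pi> n \<pi>' "Suc k", simplified]
      by (simp add: consistent_def resume_def)
  qed
qed

definition deters :: "'v game \<Rightarrow> nat \<Rightarrow> (nat \<Rightarrow> 'v) \<Rightarrow> nat \<Rightarrow> 'v \<Rightarrow> ('v list \<Rightarrow> 'v) \<Rightarrow> bool" where
  "deters G c \<pi> n v \<tau> \<longleftrightarrow> is_strategy G (own0 G) \<tau> \<and>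
     (\<forall>\<pi>'. is_play G \<pi>' \<and> \<pi>' 0 = v \<and> consistent (own0 G) \<tau> \<pi>' \<longrightarrow>
        cost0 G (conc (pref \<pi> n) \<pi>') \<le> enat c \<or> cost1 G (conc (pref \<pi> n) \<pi>') > cost1 G \<pi>)"

lemma witness_iff_deters:
  "witness G c \<pi> \<longleftrightarrow> is_play G \<pi> \<and> \<pi> 0 = init G \<and> cost0 G \<pi> \<le> enat c \<and>
     (\<forall>n v. is_deviation G \<pi> n v \<longrightarrow> (\<exists>\<tau>. deters G c \<pi> n v \<tau>))"
  unfolding witness_def deters_def ..

lemma cost1_minimal_outcome_witness:
  assumes wf: "wf_game G" and sol: "NCNS_solution G c \<sigma>0" and \<pi>: "\<pi> \<in> outcomes G \<sigma>0"
    and min: "\<And>\<rho>. \<rho> \<in> outcomes G \<sigma>0 \<Longrightarrow> cost1 G \<pi> \<le> cost1 G \<rho>"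
  shows "witness G c \<pi>"
proof -
  have \<sigma>0: "is_strategy G (own0 G) \<sigma>0"
    and safe: "\<And>\<rho>. \<rho> \<in> outcomes G \<sigma>0 \<Longrightarrow> (\<forall>\<rho>'\<in>outcomes G \<sigma>0. cost1 G \<rho> \<le> cost1 G \<rho>')
      \<Longrightarrow> cost0 G \<rho> \<le> enat c"
    using sol by (auto simp: NCNS_solution_iff)
  have play: "is_play G \<pi>" and init: "\<pi> 0 = init G" and cons: "consistent (own0 G) \<sigma>0 \<pi>"
    using \<pi> outcomes_iff[OF wf \<sigma>0] by auto
  have "deters G c \<pi> n v (resume G \<sigma>0 (pref \<pi> n))" if dev: "is_deviation G \<pi> n v" for n v
    unfolding deters_def
  proof (intro conjI allI impI)
    show "is_strategy G (own0 G) (resume G \<sigma>0 (pref \<pi> n))"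
      using wf \<sigma>0 by (rule resume_strategy)
    fix \<pi>' assume \<pi>': "is_play G \<pi>' \<and> \<pi>' 0 = v \<and> consistent (own0 G) (resume G \<sigma>0 (pref \<pi> n)) \<pi>'"
    let ?\<rho> = "conc (pref \<pi> n) \<pi>'"
    have "((pref \<pi> n @ [v]) ! n, (pref \<pi> n @ [v]) ! Suc n) \<in> edges G"
      using dev unfolding is_deviation_def is_path_def by (metis length_append_singleton length_pref lessI)
    then have "(\<pi> n, \<pi>' 0) \<in> edges G" using \<pi>' by (simp add: nth_append)
    then have \<rho>_play: "is_play G ?\<rho>" using play \<pi>' by (auto intro: conc_play)
    moreover have "\<pi> n \<notin> own0 G" using dev wf unfolding is_deviation_def wf_game_def by auto
    ultimately have "?\<rho> \<in> outcomes G \<sigma>0"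
      using outcomes_iff[OF wf \<sigma>0] init cons \<pi>' consistent_conc_resume by fastforce
    then show "cost0 G ?\<rho> \<le> enat c \<or> cost1 G ?\<rho> > cost1 G \<pi>"
      using safe min by (meson not_less order_trans)
  qed
  then show ?thesis
    unfolding witness_iff_deters using play init safe[OF \<pi>] min by blast
qed

definition deterrent :: "'v game \<Rightarrow> nat \<Rightarrow> (nat \<Rightarrow> 'v) \<Rightarrow> nat \<Rightarrow> 'v \<Rightarrow> 'v list \<Rightarrow> 'v" where
  "deterrent G c \<pi> n v = (SOME \<tau>. deters G c \<pi> n v \<tau>)"

lemma deterrent_deters:
  assumes "witness G c \<pi>" "is_deviation G \<pi> n v"
  shows "deters G c \<pi> n v (deterrent G c \<pi> n v)"
proof -
  have "\<exists>\<tau>. deters G c \<pi> n v \<tau>" using assms by (simp add: witness_iff_deters)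
  then show ?thesis unfolding deterrent_def by (rule someI_ex)
qed

(* Histories leaving \<pi> other than by a deviation of player 1 are never reached against this
   strategy; there any move will do. *)
definition witness_strategy :: "'v game \<Rightarrow> nat \<Rightarrow> (nat \<Rightarrow> 'v) \<Rightarrow> 'v list \<Rightarrow> 'v" where
  "witness_strategy G c \<pi> h =
     (if along \<pi> h then \<pi> (length h)
      else let m = (LEAST i. h ! i \<noteq> \<pi> i) in
        if 0 < m \<and> is_deviation G \<pi> (m - 1) (h ! m)
        then deterrent G c \<pi> (m - 1) (h ! m) (drop m h)
        else succ G (last h))"

lemma witness_strategy_strategy:
  assumes wf: "wf_game G" and w: "witness G c \<pi>"
  shows "is_strategy G (own0 G) (witness_strategy G c \<pi>)"
proof (unfold is_strategy_def, intro allI impI)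
  fix h assume h: "is_path G h \<and> last h \<in> own0 G"
  then have "h \<noteq> []" by (simp add: is_path_def)
  define m where "m = (LEAST i. h ! i \<noteq> \<pi> i)"
  show "(last h, witness_strategy G c \<pi> h) \<in> edges G"
  proof (cases "along \<pi> h")
    case True
    then show ?thesis
      using along_edge[OF _ \<open>h \<noteq> []\<close>] w by (simp add: witness_strategy_def witness_def)
  next
    case False
    then obtain i where "i < length h" "h ! i \<noteq> \<pi> i" by (auto simp: along_def)
    then have "m < length h" unfolding m_def by (meson Least_le le_less_trans)
    then have "is_path G (drop m h)" "last (drop m h) = last h"
      using h path_drop by auto
    moreover have "(last h, deterrent G c \<pi> (m - 1) (h ! m) (drop m h)) \<in> edges G"
      if "is_deviation G \<pi> (m - 1) (h ! m)"
    proof -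
      have "is_strategy G (own0 G) (deterrent G c \<pi> (m - 1) (h ! m))"
        using deterrent_deters[OF w that] by (simp add: deters_def)
      then show ?thesis
        using h calculation unfolding is_strategy_def by auto
    qed
    ultimately show ?thesis
      using False h succ_edge[OF wf path_last]
      unfolding witness_strategy_def m_def[symmetric] Let_def by auto
  qed
qed

lemma consistent_witness_strategy: "consistent (own0 G) (witness_strategy G c \<pi>) \<pi>"
  by (simp add: consistent_def witness_strategy_def)

lemma first_divergence:
  assumes "\<rho> 0 = \<pi> 0" "\<rho> \<noteq> \<pi>"
  obtains n where "pref \<rho> n = pref \<pi> n" "\<rho> (Suc n) \<noteq> \<pi> (Suc n)"
proof -
  define m where "m = (LEAST i. \<rho> i \<noteq> \<pi> i)"
  have "\<exists>i. \<rho> i \<noteq> \<pi> i" using assms(2) by auto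
  then have "\<rho> m \<noteq> \<pi> m" unfolding m_def by (rule LeastI_ex)
  then obtain n where n: "m = Suc n" using assms(1) by (cases m) auto
  have "\<rho> k = \<pi> k" if "k \<le> n" for k
    using not_less_Least[of k "\<lambda>i. \<rho> i \<noteq> \<pi> i"] n that unfolding m_def by auto
  then have "pref \<rho> n = pref \<pi> n" by (simp add: pref_eq_iff)
  then show ?thesis using that \<open>\<rho> m \<noteq> \<pi> m\<close> n by blast
qed

lemma witness_strategy_after_divergence:
  assumes "pref \<rho> n = pref \<pi> n" "is_deviation G \<pi> n (\<rho> (Suc n))"
  shows "witness_strategy G c \<pi> (pref \<rho> (Suc (n + k)))
    = deterrent G c \<pi> n (\<rho> (Suc n)) (pref (\<lambda>j. \<rho> (Suc (n + j))) k)"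
proof -
  let ?h = "pref \<rho> (Suc (n + k))"
  have neq: "\<rho> (Suc n) \<noteq> \<pi> (Suc n)" using assms(2) by (simp add: is_deviation_def)
  have below: "\<rho> j = \<pi> j" if "j \<le> n" for j using assms(1) that by (simp add: pref_eq_iff)
  have diverges: "?h ! Suc n \<noteq> \<pi> (Suc n)" using neq by simp
  moreover have "Suc n < length ?h" by simp
  ultimately have "\<not> along \<pi> ?h" unfolding along_def by blast
  moreover have "(LEAST i. ?h ! i \<noteq> \<pi> i) = Suc n"
  proof (rule Least_equality)
    show "Suc n \<le> i" if "?h ! i \<noteq> \<pi> i" for i
    proof (rule ccontr)
      assume "\<not> Suc n \<le> i"
      then have "?h ! i = \<pi> i" using below by simp
      then show False using that by contradiction
    qed
  qed (rule diverges)
  moreover have "drop (Suc n) ?h = pref (\<lambda>j. \<rho> (Suc (n + j))) k"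
    using drop_pref[of "Suc n" \<rho> k] by simp
  ultimately show ?thesis using assms(2) by (simp add: witness_strategy_def)
qed

lemma divergence_is_deviation:
  assumes wf: "wf_game G" and play: "is_play G \<rho>"
    and cons: "consistent (own0 G) (witness_strategy G c \<pi>) \<rho>"
    and div: "pref \<rho> n = pref \<pi> n" "\<rho> (Suc n) \<noteq> \<pi> (Suc n)"
  shows "is_deviation G \<pi> n (\<rho> (Suc n))"
proof -
  have "\<rho> n = \<pi> n" using div(1) last_pref by metis
  moreover have "\<rho> n \<in> verts G" using play by (simp add: is_play_def)
  moreover have "\<rho> n \<notin> own0 G"
  proof
    assume "\<rho> n \<in> own0 G"
    then have "\<rho> (Suc n) = witness_strategy G c \<pi> (pref \<pi> n)"
      using cons div(1) by (simp add: consistent_def)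
    then show False using div(2) by (simp add: witness_strategy_def)
  qed
  ultimately have "\<pi> n \<in> own1 G" using wf by (auto simp: wf_game_def)
  moreover have "is_path G (pref \<pi> n @ [\<rho> (Suc n)])"
    using path_pref[OF play, of "Suc n"] div(1) by (simp add: pref_Suc)
  ultimately show ?thesis using div(2) by (simp add: is_deviation_def)
qed

lemma witness_strategy_solution:
  assumes wf: "wf_game G" and w: "witness G c \<pi>"
  shows "NCNS_solution G c (witness_strategy G c \<pi>)"
  unfolding NCNS_solution_iff
proof (intro conjI ballI impI)
  let ?\<sigma> = "witness_strategy G c \<pi>"
  show \<sigma>: "is_strategy G (own0 G) ?\<sigma>" using wf w by (rule witness_strategy_strategy)
  have play: "is_play G \<pi>" and init: "\<pi> 0 = init G" and c0: "cost0 G \<pi> \<le> enat c"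
    using w by (auto simp: witness_def)
  fix \<rho> assume \<rho>: "\<rho> \<in> outcomes G ?\<sigma>" and min: "\<forall>\<rho>'\<in>outcomes G ?\<sigma>. cost1 G \<rho> \<le> cost1 G \<rho>'"
  have "\<pi> \<in> outcomes G ?\<sigma>"
    using outcomes_iff[OF wf \<sigma>] play init consistent_witness_strategy by blast
  then have le: "cost1 G \<rho> \<le> cost1 G \<pi>" using min by blast
  have \<rho>_play: "is_play G \<rho>" and \<rho>_init: "\<rho> 0 = init G" and \<rho>_cons: "consistent (own0 G) ?\<sigma> \<rho>"
    using \<rho> outcomes_iff[OF wf \<sigma>] by auto
  show "cost0 G \<rho> \<le> enat c"
  proof (cases "\<rho> = \<pi>")
    case True
    then show ?thesis using c0 by simp
  next
    case False
    then obtain n where div: "pref \<rho> n = pref \<pi> n" "\<rho> (Suc n) \<noteq> \<pi> (Suc n)"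
      using first_divergence \<rho>_init init by metis
    let ?v = "\<rho> (Suc n)" and ?\<pi>' = "\<lambda>k. \<rho> (Suc (n + k))"
    have dev: "is_deviation G \<pi> n ?v"
      using wf \<rho>_play \<rho>_cons div by (rule divergence_is_deviation)
    have "consistent (own0 G) (deterrent G c \<pi> n ?v) ?\<pi>'"
      using \<rho>_cons witness_strategy_after_divergence[OF div(1) dev]
      by (simp add: consistent_def pref_Suc)
    moreover have "is_play G ?\<pi>'" using \<rho>_play by (simp add: is_play_def)
    ultimately have "cost0 G (conc (pref \<pi> n) ?\<pi>') \<le> enat c \<or> cost1 G (conc (pref \<pi> n) ?\<pi>') > cost1 G \<pi>"
      using deterrent_deters[OF w dev] by (simp add: deters_def)
    then show ?thesis using le div(1) conc_pref_suffix[of \<rho> n] by (metis leD)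
  qed
qed

theorem lemma27:
  fixes G :: "'v game" and c :: nat
  assumes "wf_game G"
  shows "(\<exists>\<sigma>0. NCNS_solution G c \<sigma>0) \<longleftrightarrow> (\<exists>\<pi>. witness G c \<pi>)"
proof
  assume "\<exists>\<sigma>0. NCNS_solution G c \<sigma>0"
  then obtain \<sigma>0 where sol: "NCNS_solution G c \<sigma>0" ..
  have "out G \<sigma>0 (\<lambda>h. succ G (last h)) \<in> outcomes G \<sigma>0"
    using succ_strategy[OF assms] by (auto simp: outcomes_def)
  then obtain \<pi> where "\<pi> \<in> outcomes G \<sigma>0" "\<And>\<rho>. \<rho> \<in> outcomes G \<sigma>0 \<Longrightarrow> cost1 G \<pi> \<le> cost1 G \<rho>"
    using ex_min_wellorder[where f = "cost1 G"] by blast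
  then show "\<exists>\<pi>. witness G c \<pi>"
    using cost1_minimal_outcome_witness[OF assms sol] by blast
next
  assume "\<exists>\<pi>. witness G c \<pi>"
  then show "\<exists>\<sigma>0. NCNS_solution G c \<sigma>0"
    using witness_strategy_solution[OF assms] by blast
qed

end
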